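(* Let $X$ be a compact metric space, $T:X\to X$ continuous, $\mathcal U$ a partition of $X$ into finitely many closed-open sets, $N\in\mathbb N$, $s\in\mathbb R$ and $f:X\to\mathbb R$ continuous. (i) If $E_1\subseteq E_2\subseteq\cdots$ and $\bigcup_iE_i=E$, then $M_N^s(\mathcal U,f,E)=\lim_{i\to\infty}M_N^s(\mathcal U,f,E_i)$. (ii) If $Z\subseteq X$ is analytic, then $M_N^s(\mathcal U,f,Z)=\sup\{M_N^s(\mathcal U,f,K):K\subseteq Z,\ K\text{ compact}\}$.
   Context: $f_n=\sum_{i=0}^{n-1}f\circ T^i$. $\mathcal W_n(\mathcal U)$ is the set of strings $\mathbf U=U_1\cdots U_n$ with $U_i\in\mathcal U$; $m(\mathbf U)=n$ is its length, and $X(\mathbf U)=\{x\in X:T^{j-1}x\in U_j,\ j=1,\dots,n\}$. A family $\Lambda\subseteq\bigcup_n\mathcal W_n(\mathcal U)$ covers $Z$ if $\bigcup_{\mathbf U\in\Lambda}X(\mathbf U)\supseteq Z$. Define $M_N^s(\mathcal U,f,Z)=\inf_\Lambda\sum_{\mathbf U\in\Lambda}\exp\big(-sm(\mathbf U)+\sup_{y\in X(\mathbf U)}f_{m(\mathbf U)}(y)\big)$, infimum over all $\Lambda\subseteq\bigcup_{n\ge N}\mathcal W_n(\mathcal U)$ covering $Z$, with the convention $\sup_{y\in\emptyset}=-\infty$. A set is analytic if it is a continuous image of $\mathbb N^{\mathbb N}$ with the product topology. *)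

theory Defs
  imports "HOL-Analysis.Analysis"
begin

definition birk_sum :: "('a \<Rightarrow> 'a) \<Rightarrow> ('a \<Rightarrow> real) \<Rightarrow> nat \<Rightarrow> 'a \<Rightarrow> real" where
  "birk_sum T f n x = (\<Sum>i<n. f ((T ^^ i) x))"

definition words :: "'a set set \<Rightarrow> nat \<Rightarrow> 'a set list set" where
  "words U n = {w. set w \<subseteq> U \<and> length w = n}"

text \<open>X(U_1...U_n) = {x in X. T^(j-1) x in U_j, j=1..n}.\<close>
definition cyl :: "'a set \<Rightarrow> ('a \<Rightarrow> 'a) \<Rightarrow> 'a set list \<Rightarrow> 'a set" where
  "cyl X T w = {x \<in> X. \<forall>j<length w. (T ^^ j) x \<in> w ! j}"

text \<open>exp(-s m(U) + sup_{y in X(U)} f_{m(U)}(y)), with sup over empty = -infinity giving 0.\<close>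
definition word_weight :: "'a set \<Rightarrow> ('a \<Rightarrow> 'a) \<Rightarrow> ('a \<Rightarrow> real) \<Rightarrow> real \<Rightarrow> 'a set list \<Rightarrow> ennreal" where
  "word_weight X T f s w =
     (if cyl X T w = {} then 0
      else ennreal (exp (- s * real (length w) + (SUP y\<in>cyl X T w. birk_sum T f (length w) y))))"

definition MNs :: "'a set \<Rightarrow> ('a \<Rightarrow> 'a) \<Rightarrow> nat \<Rightarrow> real \<Rightarrow> 'a set set \<Rightarrow> ('a \<Rightarrow> real) \<Rightarrow> 'a set \<Rightarrow> ennreal" where
  "MNs X T N s U f Z =
     (INF \<Lambda> \<in> {\<Lambda>. \<Lambda> \<subseteq> (\<Union>n\<in>{N..}. words U n) \<and> Z \<subseteq> (\<Union>w\<in>\<Lambda>. cyl X T w)}.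
        (\<Sum>\<^sub>\<infinity> w\<in>\<Lambda>. word_weight X T f s w))"

definition analytic_set :: "'a::topological_space set \<Rightarrow> bool" where
  "analytic_set Z \<longleftrightarrow> (\<exists>g :: (nat \<Rightarrow> nat) \<Rightarrow> 'a.
      continuous_map (product_topology (\<lambda>_. discrete_topology (UNIV::nat set)) UNIV) euclidean g
      \<and> g ` UNIV = Z)"

end

theory Submission
  imports Defs "HOL-Library.Sublist"
begin

text \<open>
  Cylinders of words over a partition are nested or disjoint according as one word is a prefix
  of the other. For (i), take covers \<open>C k\<close> of \<open>E k\<close> whose weight exceeds \<open>M (E k)\<close> by at most
  \<open>e / 2 ^ Suc k\<close>, and keep only the prefix-minimal words among all of them. These still cover
  the union, and by induction on \<open>k\<close> every subfamily that is minimal over \<open>C 0, \<dots>, C (k - 1)\<close>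
  weighs at most any other cover of its trace on \<open>E k\<close> plus the errors accumulated so far:
  otherwise the near-optimal \<open>C k\<close> could be improved by more than its own error. Hence
  \<open>M (\<Union>k. E k) \<le> sup k. M (E k) + e\<close>.

  For (ii), \<open>M\<close> is monotone, continuous along increasing sequences by (i), and outer regular since
  cylinders are relatively open, so Choquet's capacitability argument on the Baire space applies.
\<close>

definition cover_weight ::
    "'a set \<Rightarrow> ('a \<Rightarrow> 'a) \<Rightarrow> ('a \<Rightarrow> real) \<Rightarrow> real \<Rightarrow> 'a set list set \<Rightarrow> ennreal" where
  "cover_weight X T f s L = (\<Sum>\<^sub>\<infinity> w\<in>L. word_weight X T f s w)"

definition long_words :: "'a set set \<Rightarrow> nat \<Rightarrow> 'a set list set" where
  "long_words U N = (\<Union>n\<in>{N..}. words U n)"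

abbreviation cyl_union :: "'a set \<Rightarrow> ('a \<Rightarrow> 'a) \<Rightarrow> 'a set list set \<Rightarrow> 'a set" where
  "cyl_union X T L \<equiv> \<Union>w\<in>L. cyl X T w"

lemma set_long_word: "w \<in> long_words U N \<Longrightarrow> set w \<subseteq> U"
  by (auto simp: long_words_def words_def)

lemma cover_weight_empty [simp]: "cover_weight X T f s {} = 0"
  by (simp add: cover_weight_def)

lemma cover_weight_mono: "A \<subseteq> B \<Longrightarrow> cover_weight X T f s A \<le> cover_weight X T f s B"
  unfolding cover_weight_def
  by (rule infsum_mono_neutral) (auto intro: nonneg_summable_on_complete)

lemma cover_weight_Un_disjoint:
  "A \<inter> B = {} \<Longrightarrow> cover_weight X T f s (A \<union> B) = cover_weight X T f s A + cover_weight X T f s B"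
  unfolding cover_weight_def
  by (rule infsum_Un_disjoint) (auto intro: nonneg_summable_on_complete)

lemma cover_weight_Un_le:
  "cover_weight X T f s (A \<union> B) \<le> cover_weight X T f s A + cover_weight X T f s B"
proof -
  have "cover_weight X T f s (A \<union> B) = cover_weight X T f s A + cover_weight X T f s (B - A)"
    using cover_weight_Un_disjoint[of A "B - A"] by (simp add: Un_Diff_cancel)
  also have "\<dots> \<le> cover_weight X T f s A + cover_weight X T f s B"
    by (intro add_left_mono cover_weight_mono) auto
  finally show ?thesis .
qed

lemma cover_weight_le_finite:
  assumes "\<And>F. finite F \<Longrightarrow> F \<subseteq> L \<Longrightarrow> cover_weight X T f s F \<le> b"
  shows "cover_weight X T f s L \<le> b"
  unfolding cover_weight_def
  by (rule infsum_le_finite_sums)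
    (use assms in \<open>auto simp: cover_weight_def intro: nonneg_summable_on_complete\<close>)

lemma MNs_eq_INF_cover_weight:
  "MNs X T N s U f Z =
     (INF L\<in>{L. L \<subseteq> long_words U N \<and> Z \<subseteq> cyl_union X T L}. cover_weight X T f s L)"
  unfolding MNs_def cover_weight_def long_words_def by simp

lemma MNs_le_cover_weight:
  "L \<subseteq> long_words U N \<Longrightarrow> Z \<subseteq> cyl_union X T L \<Longrightarrow> MNs X T N s U f Z \<le> cover_weight X T f s L"
  unfolding MNs_eq_INF_cover_weight by (rule INF_lower) auto

lemma MNs_mono: "A \<subseteq> B \<Longrightarrow> MNs X T N s U f A \<le> MNs X T N s U f B"
  unfolding MNs_eq_INF_cover_weight by (rule INF_superset_mono) auto

lemma MNs_lessE:
  assumes "MNs X T N s U f Z < c"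
  obtains L where "L \<subseteq> long_words U N" "Z \<subseteq> cyl_union X T L" "cover_weight X T f s L < c"
  using assms unfolding MNs_eq_INF_cover_weight INF_less_iff by auto

subsection \<open>Cylinders and prefixes\<close>

lemma cyl_antimono_prefix:
  assumes "prefix u w" shows "cyl X T w \<subseteq> cyl X T u"
proof
  fix x assume x: "x \<in> cyl X T w"
  obtain zs where w: "w = u @ zs" using assms by (auto simp: prefix_def)
  have "(T ^^ j) x \<in> u ! j" if "j < length u" for j
  proof -
    have "(T ^^ j) x \<in> w ! j" using x that unfolding cyl_def w by simp
    then show ?thesis using that by (simp add: w nth_append)
  qed
  then show "x \<in> cyl X T u" using x by (simp add: cyl_def)
qed

lemma prefix_if_cyl_meet:
  assumes "disjoint U" "set u \<subseteq> U" "set w \<subseteq> U" "x \<in> cyl X T u" "x \<in> cyl X T w"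
  shows "prefix u w \<or> prefix w u"
proof (rule ccontr)
  assume "\<not> ?thesis"
  then have "u \<parallel> w" unfolding parallel_def by blast
  from parallel_decomp[OF this] obtain as b bs c cs
    where bc: "b \<noteq> c" and u: "u = as @ b # bs" and w: "w = as @ c # cs"
    by blast
  have "length as < length u" "length as < length w" by (simp_all add: u w)
  moreover have "\<forall>j<length u. (T ^^ j) x \<in> u ! j" "\<forall>j<length w. (T ^^ j) x \<in> w ! j"
    using assms(4,5) by (simp_all add: cyl_def)
  ultimately have "(T ^^ length as) x \<in> u ! length as \<inter> w ! length as"
    by blast
  moreover have "u ! length as \<inter> w ! length as = {}"
    using disjointD[OF assms(1)] assms(2,3) bc by (simp add: u w)
  ultimately show False by blast
qed

definition prefix_minimal :: "'b list set \<Rightarrow> 'b list set" where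
  "prefix_minimal A = {w \<in> A. \<forall>u\<in>A. prefix u w \<longrightarrow> u = w}"

lemma prefix_minimal_subset: "prefix_minimal A \<subseteq> A"
  by (auto simp: prefix_minimal_def)

lemma prefix_minimal_antimono:
  "A \<subseteq> B \<Longrightarrow> w \<in> A \<Longrightarrow> w \<in> prefix_minimal B \<Longrightarrow> w \<in> prefix_minimal A"
  by (auto simp: prefix_minimal_def)

lemma prefix_minimal_below: "w \<in> A \<Longrightarrow> \<exists>u\<in>prefix_minimal A. prefix u w"
proof (induction "length w" arbitrary: w rule: less_induct)
  case less
  show ?case
  proof (cases "w \<in> prefix_minimal A")
    case False
    then obtain u where u: "u \<in> A" "strict_prefix u w"
      using less.prems by (auto simp: prefix_minimal_def strict_prefix_def)
    then obtain v where "v \<in> prefix_minimal A" "prefix v u"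
      using less.hyps[OF prefix_length_less] by blast
    then show ?thesis
      using u(2) by (meson prefix_order.trans strict_prefix_def)
  qed blast
qed

lemma cyl_union_prefix_minimal: "cyl_union X T A \<subseteq> cyl_union X T (prefix_minimal A)"
proof
  fix x assume "x \<in> cyl_union X T A"
  then obtain w where "w \<in> A" "x \<in> cyl X T w" by blast
  moreover obtain u where "u \<in> prefix_minimal A" "prefix u w"
    using prefix_minimal_below[OF \<open>w \<in> A\<close>] by blast
  ultimately show "x \<in> cyl_union X T (prefix_minimal A)"
    using cyl_antimono_prefix by blast
qed

subsection \<open>Continuity along increasing sequences\<close>

lemma near_optimal_cover_part_le:
  assumes C: "C \<subseteq> long_words U N" "E \<subseteq> cyl_union X T C"
    and near: "cover_weight X T f s C \<le> MNs X T N s U f E + \<delta>"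
    and finite_weight: "cover_weight X T f s C \<noteq> \<infinity>"
    and Q: "Q \<subseteq> C"
    and D: "D \<subseteq> long_words U N" "E \<inter> cyl_union X T Q \<subseteq> cyl_union X T D"
  shows "cover_weight X T f s Q \<le> cover_weight X T f s D + \<delta>"
proof -
  let ?w = "cover_weight X T f s"
  have "C = (C - Q) \<union> Q" "(C - Q) \<inter> Q = {}"
    using Q by auto
  then have split: "?w C = ?w (C - Q) + ?w Q"
    using cover_weight_Un_disjoint by metis
  have "E \<subseteq> cyl_union X T ((C - Q) \<union> D)"
    using C(2) D(2) by blast
  then have "MNs X T N s U f E \<le> ?w ((C - Q) \<union> D)"
    using C(1) D(1) by (intro MNs_le_cover_weight) auto
  also have "\<dots> \<le> ?w (C - Q) + ?w D"
    by (rule cover_weight_Un_le)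
  finally have "?w (C - Q) + ?w Q \<le> ?w (C - Q) + (?w D + \<delta>)"
    using near split by (metis add.assoc add_right_mono order_trans)
  moreover have "?w (C - Q) \<noteq> \<infinity>"
    using split finite_weight by auto
  ultimately show ?thesis
    using ennreal_add_left_cancel_le by blast
qed

text \<open>A family minimal in \<open>A \<union> C\<close> splits into an old part, minimal in \<open>A\<close> and refined by
  the words \<open>R\<close> of \<open>C\<close> extending it, and a new part inside \<open>C\<close>; the near-optimality of \<open>C\<close>
  bounds the new part together with \<open>R\<close>.\<close>
lemma prefix_minimal_cover_weight_step:
  assumes dU: "disjoint U"
    and words: "A \<subseteq> long_words U N" "C \<subseteq> long_words U N"
    and C: "E \<subseteq> cyl_union X T C" "cover_weight X T f s C \<le> MNs X T N s U f E + \<delta>"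
      "cover_weight X T f s C \<noteq> \<infinity>"
    and IH: "\<And>G D. G \<subseteq> prefix_minimal A \<Longrightarrow> D \<subseteq> long_words U N \<Longrightarrow>
      E \<inter> cyl_union X T G \<subseteq> cyl_union X T D \<Longrightarrow> cover_weight X T f s G \<le> cover_weight X T f s D + S"
    and G: "G \<subseteq> prefix_minimal (A \<union> C)"
    and D: "D \<subseteq> long_words U N" "E \<inter> cyl_union X T G \<subseteq> cyl_union X T D"
  shows "cover_weight X T f s G \<le> cover_weight X T f s D + \<delta> + S"
proof -
  let ?w = "cover_weight X T f s"
  define Gold where "Gold = G - C"
  define Gnew where "Gnew = G \<inter> C"
  define R where "R = {c \<in> C. \<exists>g\<in>Gold. prefix g c}"
  have G_sub: "G \<subseteq> A \<union> C" and minimal: "\<And>u g. u \<in> A \<union> C \<Longrightarrow> g \<in> G \<Longrightarrow> prefix u g \<Longrightarrow> u = g"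
    using G by (auto simp: prefix_minimal_def)
  have "Gold \<subseteq> prefix_minimal A"
    using G G_sub prefix_minimal_antimono[of A "A \<union> C"] by (auto simp: Gold_def)
  moreover have "E \<inter> cyl_union X T Gold \<subseteq> cyl_union X T R"
  proof
    fix x assume "x \<in> E \<inter> cyl_union X T Gold"
    then obtain g c where g: "g \<in> Gold" "x \<in> cyl X T g" and c: "c \<in> C" "x \<in> cyl X T c"
      using C(1) by blast
    have "prefix g c \<or> prefix c g"
      using prefix_if_cyl_meet[OF dU _ _ g(2) c(2)] g(1) c(1) G_sub words
      by (auto simp: Gold_def dest!: set_long_word)
    then have "prefix g c"
      using minimal[of c g] c(1) g(1) by (auto simp: Gold_def)
    then show "x \<in> cyl_union X T R"
      using c g(1) by (auto simp: R_def)
  qed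
  ultimately have old: "?w Gold \<le> ?w R + S"
    using words(2) by (intro IH) (auto simp: R_def)
  have disjoint_new: "Gnew \<inter> R = {}"
  proof (rule ccontr)
    assume "Gnew \<inter> R \<noteq> {}"
    then obtain c g where "c \<in> G" "c \<in> C" "g \<in> Gold" "prefix g c"
      by (auto simp: Gnew_def R_def)
    moreover from this have "g = c"
      using minimal G_sub by (auto simp: Gold_def)
    ultimately show False by (simp add: Gold_def)
  qed
  have "cyl_union X T R \<subseteq> cyl_union X T G"
    using cyl_antimono_prefix by (fastforce simp: R_def Gold_def)
  then have "E \<inter> cyl_union X T (Gnew \<union> R) \<subseteq> cyl_union X T D"
    using D(2) by (auto simp: Gnew_def)
  then have new: "?w (Gnew \<union> R) \<le> ?w D + \<delta>"
    using words(2) C D(1) by (intro near_optimal_cover_part_le) (auto simp: Gnew_def R_def)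
  have "G = Gold \<union> Gnew" "Gold \<inter> Gnew = {}"
    by (auto simp: Gold_def Gnew_def)
  then have "?w G = ?w Gold + ?w Gnew"
    using cover_weight_Un_disjoint by metis
  also have "\<dots> \<le> ?w R + S + ?w Gnew"
    using old by (rule add_right_mono)
  also have "\<dots> = ?w (Gnew \<union> R) + S"
    using cover_weight_Un_disjoint[OF disjoint_new] by (simp add: ac_simps)
  also have "\<dots> \<le> ?w D + \<delta> + S"
    using new by (rule add_right_mono)
  finally show ?thesis .
qed

lemma prefix_minimal_cover_weight_le:
  assumes dU: "disjoint U" and E: "incseq E"
    and C: "\<And>k. C k \<subseteq> long_words U N" "\<And>k. E k \<subseteq> cyl_union X T (C k)"
      "\<And>k. cover_weight X T f s (C k) \<le> MNs X T N s U f (E k) + \<delta> k"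
      "\<And>k. cover_weight X T f s (C k) \<noteq> \<infinity>"
  shows "G \<subseteq> prefix_minimal (\<Union>j<k. C j) \<Longrightarrow> D \<subseteq> long_words U N \<Longrightarrow>
    E k \<inter> cyl_union X T G \<subseteq> cyl_union X T D \<Longrightarrow>
    cover_weight X T f s G \<le> cover_weight X T f s D + (\<Sum>j<k. \<delta> j)"
proof (induction k arbitrary: G D)
  case 0
  then show ?case by (simp add: prefix_minimal_def)
next
  case (Suc k)
  have "(\<Union>j<Suc k. C j) = (\<Union>j<k. C j) \<union> C k"
    by (auto simp: lessThan_Suc)
  moreover have "E k \<inter> cyl_union X T G \<subseteq> cyl_union X T D"
    using Suc.prems(3) incseq_SucD[OF E, of k] by blast
  moreover have "(\<Union>j<k. C j) \<subseteq> long_words U N"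
    using C(1) by blast
  ultimately have "cover_weight X T f s G \<le> cover_weight X T f s D + \<delta> k + (\<Sum>j<k. \<delta> j)"
    using Suc.prems(1,2) C
    by (intro prefix_minimal_cover_weight_step[OF dU, where A = "\<Union>j<k. C j" and C = "C k"])
      (auto intro: Suc.IH)
  then show ?case by (simp add: ac_simps)
qed

lemma finite_subset_UN_lessThan:
  fixes C :: "nat \<Rightarrow> 'b set"
  assumes "finite F" "F \<subseteq> (\<Union>k. C k)"
  shows "\<exists>k. F \<subseteq> (\<Union>j<k. C j)"
  using assms
proof (induction F rule: finite_induct)
  case (insert x F)
  then obtain i k where "x \<in> C i" "F \<subseteq> (\<Union>j<k. C j)"
    by auto
  then have "insert x F \<subseteq> (\<Union>j<max (Suc i) k. C j)"
    by fastforce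
  then show ?case ..
qed simp

lemma sum_halves_le:
  fixes e :: real
  assumes "0 \<le> e"
  shows "(\<Sum>j<n. e / 2 ^ Suc j) \<le> e"
proof -
  have "(\<Sum>j<n. e / 2 ^ Suc j) = e * (1 - 1 / 2 ^ n)"
    by (induction n) (simp_all add: field_simps)
  then show ?thesis
    using assms by (simp add: mult_left_le)
qed

lemma MNs_Union_le_near_optimal_covers:
  assumes dU: "disjoint U" and E: "incseq E"
    and C: "\<And>k. C k \<subseteq> long_words U N" "\<And>k. E k \<subseteq> cyl_union X T (C k)"
      "\<And>k. cover_weight X T f s (C k) \<le> MNs X T N s U f (E k) + \<delta> k"
      "\<And>k. cover_weight X T f s (C k) \<noteq> \<infinity>"
    and bound: "\<And>k. MNs X T N s U f (E k) + (\<Sum>j<Suc k. \<delta> j) \<le> b"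
  shows "MNs X T N s U f (\<Union>i. E i) \<le> b"
proof -
  define M where "M = prefix_minimal (\<Union>k. C k)"
  have "(\<Union>i. E i) \<subseteq> cyl_union X T M"
    using C(2) cyl_union_prefix_minimal[of X T "\<Union>k. C k"] by (fastforce simp: M_def)
  moreover have "M \<subseteq> long_words U N"
    using C(1) prefix_minimal_subset unfolding M_def by blast
  ultimately have "MNs X T N s U f (\<Union>i. E i) \<le> cover_weight X T f s M"
    by (intro MNs_le_cover_weight)
  also have "\<dots> \<le> b"
  proof (rule cover_weight_le_finite)
    fix F assume F: "finite F" "F \<subseteq> M"
    have "F \<subseteq> (\<Union>k. C k)"
      using F(2) prefix_minimal_subset[of "\<Union>k. C k"] unfolding M_def by (rule order_trans)
    then obtain k where "F \<subseteq> (\<Union>j<k. C j)"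
      using finite_subset_UN_lessThan[OF F(1)] by blast
    moreover have "(\<Union>j<k. C j) \<subseteq> (\<Union>k. C k)"
      by blast
    ultimately have "F \<subseteq> prefix_minimal (\<Union>j<k. C j)"
      using F(2) prefix_minimal_antimono unfolding M_def by blast
    moreover have "E k \<inter> cyl_union X T F \<subseteq> cyl_union X T (C k)"
      using C(2)[of k] by blast
    ultimately have "cover_weight X T f s F \<le> cover_weight X T f s (C k) + (\<Sum>j<k. \<delta> j)"
      using prefix_minimal_cover_weight_le[OF dU E C] C(1) by blast
    also have "\<dots> \<le> MNs X T N s U f (E k) + \<delta> k + (\<Sum>j<k. \<delta> j)"
      using C(3)[of k] by (rule add_right_mono)
    also have "\<dots> \<le> b"
      using bound[of k] by (simp add: ac_simps)
    finally show "cover_weight X T f s F \<le> b" .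
  qed
  finally show ?thesis .
qed

lemma MNs_Union_incseq_le:
  assumes dU: "disjoint U" and E: "incseq E" and bound: "\<And>i. MNs X T N s U f (E i) \<le> a"
  shows "MNs X T N s U f (\<Union>i. E i) \<le> a"
proof (rule ennreal_le_epsilon)
  fix e :: real assume "a < top" "0 < e"
  define \<delta> where "\<delta> j = ennreal (e / 2 ^ Suc j)" for j
  have MNs_finite: "MNs X T N s U f (E k) < top" for k
    using bound[of k] \<open>a < top\<close> by (rule le_less_trans)
  have "MNs X T N s U f (E k) < MNs X T N s U f (E k) + \<delta> k" for k
    using MNs_finite[of k] \<open>0 < e\<close> ennreal_add_left_cancel_less[of _ 0 "\<delta> k"]
    by (simp add: \<delta>_def)
  then have "\<exists>L. L \<subseteq> long_words U N \<and> E k \<subseteq> cyl_union X T L \<and>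
      cover_weight X T f s L < MNs X T N s U f (E k) + \<delta> k" for k
    by (meson MNs_lessE)
  then obtain C where C: "\<And>k. C k \<subseteq> long_words U N" "\<And>k. E k \<subseteq> cyl_union X T (C k)"
    and C_less: "\<And>k. cover_weight X T f s (C k) < MNs X T N s U f (E k) + \<delta> k"
    by metis
  have C_finite: "cover_weight X T f s (C k) \<noteq> \<infinity>" for k
    using C_less[of k] MNs_finite[of k] by (auto simp: \<delta>_def top_unique)
  have "(\<Sum>j<k. \<delta> j) \<le> ennreal e" for k
    using sum_halves_le[of e k] \<open>0 < e\<close> by (simp add: \<delta>_def ennreal_leI)
  then have "MNs X T N s U f (E k) + (\<Sum>j<Suc k. \<delta> j) \<le> a + ennreal e" for k
    using bound[of k] by (rule add_mono[rotated])
  then show "MNs X T N s U f (\<Union>i. E i) \<le> a + ennreal e"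
    using MNs_Union_le_near_optimal_covers[OF dU E C less_imp_le[OF C_less] C_finite] by blast
qed

lemma MNs_incseq_tendsto:
  assumes "disjoint U" "incseq E"
  shows "(\<lambda>i. MNs X T N s U f (E i)) \<longlonglongrightarrow> MNs X T N s U f (\<Union>i. E i)"
proof -
  have "incseq (\<lambda>i. MNs X T N s U f (E i))"
    using assms(2) unfolding incseq_def by (simp add: MNs_mono)
  moreover have "(SUP i. MNs X T N s U f (E i)) = MNs X T N s U f (\<Union>i. E i)"
  proof (rule antisym)
    show "(SUP i. MNs X T N s U f (E i)) \<le> MNs X T N s U f (\<Union>i. E i)"
      by (intro SUP_least MNs_mono) auto
    show "MNs X T N s U f (\<Union>i. E i) \<le> (SUP i. MNs X T N s U f (E i))"
      by (rule MNs_Union_incseq_le[OF assms]) (rule SUP_upper, simp)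
  qed
  ultimately show ?thesis
    using LIMSEQ_SUP by metis
qed

subsection \<open>Outer regularity\<close>

lemma continuous_map_funpow: "continuous_map S S T \<Longrightarrow> continuous_map S S (T ^^ n)"
  by (induction n) (auto intro: continuous_map_compose)

lemma openin_cyl:
  assumes T: "continuous_on X T" "T ` X \<subseteq> X"
    and U: "\<forall>A\<in>U. openin (top_of_set X) A" and w: "set w \<subseteq> U"
  shows "openin (top_of_set X) (cyl X T w)"
proof -
  have "continuous_map (top_of_set X) (top_of_set X) T"
    using T by auto
  then have Tj: "continuous_map (top_of_set X) (top_of_set X) (T ^^ j)" for j
    by (rule continuous_map_funpow)
  have open_j: "openin (top_of_set X) {x \<in> X. (T ^^ j) x \<in> w ! j}" if "j < length w" for j
  proof -
    have "openin (top_of_set X) (w ! j)"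
      using U w nth_mem[OF that] by blast
    from openin_continuous_map_preimage[OF Tj this] show ?thesis
      by simp
  qed
  have "cyl X T w = (\<Inter>j\<in>{..<length w}. {x \<in> X. (T ^^ j) x \<in> w ! j}) \<inter> topspace (top_of_set X)"
    by (auto simp: cyl_def)
  also have "openin (top_of_set X) \<dots>"
    by (rule openin_INT) (simp_all add: open_j)
  finally show ?thesis .
qed

lemma MNs_outer_regular:
  assumes T: "continuous_on X T" "T ` X \<subseteq> X"
    and U: "\<forall>A\<in>U. openin (top_of_set X) A" and K: "MNs X T N s U f K < c"
  shows "\<exists>V. open V \<and> K \<subseteq> V \<and> MNs X T N s U f (X \<inter> V) < c"
proof -
  obtain L where L: "L \<subseteq> long_words U N" "K \<subseteq> cyl_union X T L" "cover_weight X T f s L < c"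
    using K by (rule MNs_lessE)
  have "openin (top_of_set X) (cyl X T w)" if "w \<in> L" for w
    using openin_cyl[OF T U set_long_word] L(1) that by blast
  then have "openin (top_of_set X) (cyl_union X T L)"
    by (intro openin_Union) blast
  then obtain V where V: "open V" "cyl_union X T L = X \<inter> V"
    by (auto simp: openin_open)
  have "MNs X T N s U f (X \<inter> V) \<le> cover_weight X T f s L"
    using L(1) V(2) by (intro MNs_le_cover_weight) simp_all
  then show ?thesis
    using L(2,3) V by (metis inf.bounded_iff le_less_trans)
qed

subsection \<open>Inner regularity on analytic sets\<close>

abbreviation baire_topology :: "(nat \<Rightarrow> nat) topology" where
  "baire_topology \<equiv> product_topology (\<lambda>_. discrete_topology UNIV) UNIV"

definition baire_nbhd :: "(nat \<Rightarrow> nat) \<Rightarrow> nat \<Rightarrow> (nat \<Rightarrow> nat) set" where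
  "baire_nbhd \<sigma> m = {\<tau>. \<forall>j<m. \<tau> j = \<sigma> j}"

lemma baire_nbhd_eq: "\<tau> \<in> baire_nbhd \<sigma> m \<Longrightarrow> baire_nbhd \<tau> m = baire_nbhd \<sigma> m"
  by (auto simp: baire_nbhd_def)

lemma baire_nbhd_antimono: "m \<le> m' \<Longrightarrow> baire_nbhd \<sigma> m' \<subseteq> baire_nbhd \<sigma> m"
  by (auto simp: baire_nbhd_def)

lemma openin_baire_nbhd: "openin baire_topology (baire_nbhd \<sigma> m)"
proof -
  have "baire_nbhd \<sigma> m = PiE UNIV (\<lambda>j. if j < m then {\<sigma> j} else UNIV)"
    by (auto simp: baire_nbhd_def PiE_iff) (metis singletonD)
  moreover have "finite {j. (if j < m then {\<sigma> j} else UNIV) \<noteq> UNIV}"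
    by (rule finite_subset[of _ "{..<m}"]) auto
  ultimately show ?thesis
    by (simp add: openin_PiE_gen)
qed

lemma baire_nbhd_subset_openin:
  assumes "openin baire_topology W" "\<sigma> \<in> W"
  shows "\<exists>m. baire_nbhd \<sigma> m \<subseteq> W"
proof -
  obtain V where V: "finite {i. V i \<noteq> UNIV}" "\<sigma> \<in> PiE UNIV V" "PiE UNIV V \<subseteq> W"
    using assms unfolding openin_product_topology_alt by auto
  obtain m where m: "{i. V i \<noteq> UNIV} \<subseteq> {..<m}"
    using finite_nat_bounded[OF V(1)] by blast
  have "baire_nbhd \<sigma> m \<subseteq> PiE UNIV V"
    using V(2) m by (fastforce simp: baire_nbhd_def PiE_iff)
  then show ?thesis
    using V(3) by blast
qed

lemma openin_baire_nbhd_interior: "openin baire_topology {\<sigma>. baire_nbhd \<sigma> m \<subseteq> W}"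
  unfolding openin_subopen[of _ "{\<sigma>. baire_nbhd \<sigma> m \<subseteq> W}"]
proof
  fix \<sigma> assume "\<sigma> \<in> {\<sigma>. baire_nbhd \<sigma> m \<subseteq> W}"
  then have "baire_nbhd \<sigma> m \<subseteq> {\<sigma>. baire_nbhd \<sigma> m \<subseteq> W}"
    using baire_nbhd_eq by auto
  moreover have "\<sigma> \<in> baire_nbhd \<sigma> m"
    by (simp add: baire_nbhd_def)
  ultimately show "\<exists>T. openin baire_topology T \<and> \<sigma> \<in> T \<and> T \<subseteq> {\<sigma>. baire_nbhd \<sigma> m \<subseteq> W}"
    using openin_baire_nbhd by blast
qed

lemma compactin_baire_box: "compactin baire_topology (PiE UNIV (\<lambda>j. {..n j}))"
  by (simp add: compactin_PiE compactin_discrete_topology)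

lemma baire_box_tube:
  assumes W: "openin baire_topology W" "PiE UNIV (\<lambda>j. {..n j}) \<subseteq> W"
  shows "\<exists>m. {\<sigma>. \<forall>j<m. \<sigma> j \<le> n j} \<subseteq> W"
proof -
  define Wm where "Wm m = {\<sigma>. baire_nbhd \<sigma> m \<subseteq> W}" for m
  have open_Wm: "openin baire_topology (Wm m)" for m
    unfolding Wm_def by (rule openin_baire_nbhd_interior)
  have cover: "PiE UNIV (\<lambda>j. {..n j}) \<subseteq> \<Union>(range Wm)"
  proof
    fix \<sigma> assume "\<sigma> \<in> PiE UNIV (\<lambda>j. {..n j})"
    then obtain m where "baire_nbhd \<sigma> m \<subseteq> W"
      using W baire_nbhd_subset_openin by blast
    then show "\<sigma> \<in> \<Union>(range Wm)"
      by (auto simp: Wm_def)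
  qed
  have "\<exists>\<F>. finite \<F> \<and> \<F> \<subseteq> range Wm \<and> PiE UNIV (\<lambda>j. {..n j}) \<subseteq> \<Union>\<F>"
    by (rule compactinD[OF compactin_baire_box _ cover]) (auto simp: open_Wm)
  then obtain \<F> where \<F>: "finite \<F>" "\<F> \<subseteq> range Wm" "PiE UNIV (\<lambda>j. {..n j}) \<subseteq> \<Union>\<F>"
    by blast
  obtain M where "finite M" "\<F> = Wm ` M"
    using finite_subset_image[OF \<F>(1,2)] by blast
  with \<F>(3) have "finite M" "PiE UNIV (\<lambda>j. {..n j}) \<subseteq> (\<Union>i\<in>M. Wm i)"
    by simp_all
  moreover obtain m where "M \<subseteq> {..<m}"
    using finite_nat_bounded[OF \<open>finite M\<close>] by blast
  moreover have "Wm i \<subseteq> Wm m" if "i < m" for i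
    using baire_nbhd_antimono[of i m] that by (auto simp: Wm_def)
  ultimately have m: "PiE UNIV (\<lambda>j. {..n j}) \<subseteq> Wm m"
    by blast
  show ?thesis
  proof (intro exI subsetI)
    fix \<tau> assume "\<tau> \<in> {\<sigma>. \<forall>j<m. \<sigma> j \<le> n j}"
    then have "(\<lambda>j. if j < m then \<tau> j else 0) \<in> PiE UNIV (\<lambda>j. {..n j})"
      by (simp add: PiE_iff)
    moreover have "\<tau> \<in> baire_nbhd (\<lambda>j. if j < m then \<tau> j else 0) m"
      by (simp add: baire_nbhd_def)
    ultimately show "\<tau> \<in> W"
      using m by (auto simp: Wm_def)
  qed
qed

lemma dependent_choice_initial_segments:
  fixes P :: "(nat \<Rightarrow> 'b) \<Rightarrow> nat \<Rightarrow> bool"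
  assumes start: "\<exists>h. P h 0"
    and local: "\<And>h h' k. (\<forall>j<k. h' j = h j) \<Longrightarrow> P h k \<Longrightarrow> P h' k"
    and extend: "\<And>h k. P h k \<Longrightarrow> \<exists>y. P (h(k := y)) (Suc k)"
  shows "\<exists>n. \<forall>k. P n k"
proof -
  have "\<exists>F. \<forall>k. P (F k) k \<and> (\<forall>j<k. F (Suc k) j = F k j)"
  proof (rule dependent_nat_choice[where P = "\<lambda>k h. P h k"])
    fix h k assume "P h k"
    then obtain y where "P (h(k := y)) (Suc k)"
      using extend by blast
    then show "\<exists>h'. P h' (Suc k) \<and> (\<forall>j<k. h' j = h j)"
      by auto
  qed (use start in blast)
  then obtain F where F: "\<And>k. P (F k) k" "\<And>j k. j < k \<Longrightarrow> F (Suc k) j = F k j"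
    by blast
  have F_stable: "F k j = F (Suc j) j" if "j < k" for j k
    using that
  proof (induction k)
    case (Suc k)
    then show ?case
      using F(2)[of j k] by (cases "j = k") auto
  qed simp
  have "P (\<lambda>j. F (Suc j) j) k" for k
    by (rule local[OF _ F(1)[of k]]) (use F_stable in metis)
  then show ?thesis by blast
qed

lemma compact_image_baire_box:
  assumes "continuous_map baire_topology euclidean g"
  shows "compact (g ` PiE UNIV (\<lambda>j. {..n j}))"
  using image_compactin[OF compactin_baire_box assms] by simp

lemma capacity_choose_coordinate_bounds:
  fixes \<mu> :: "'a set \<Rightarrow> ennreal" and g :: "(nat \<Rightarrow> nat) \<Rightarrow> 'a"
  assumes incseq_tendsto: "\<And>E. (\<And>i. E i \<subseteq> X) \<Longrightarrow> incseq E \<Longrightarrow> (\<lambda>i. \<mu> (E i)) \<longlonglongrightarrow> \<mu> (\<Union>i. E i)"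
    and g: "range g \<subseteq> X" and c: "c < \<mu> (range g)"
  shows "\<exists>n. \<forall>k. c < \<mu> (g ` {\<sigma>. \<forall>j<k. \<sigma> j \<le> n j})"
proof (rule dependent_choice_initial_segments)
  show "\<exists>h. c < \<mu> (g ` {\<sigma>. \<forall>j<0. \<sigma> j \<le> h j})"
    using c by simp
  show "c < \<mu> (g ` {\<sigma>. \<forall>j<k. \<sigma> j \<le> h' j})"
    if "\<forall>j<k. h' j = h j" "c < \<mu> (g ` {\<sigma>. \<forall>j<k. \<sigma> j \<le> h j})" for h h' k
    using that by simp
  show "\<exists>y. c < \<mu> (g ` {\<sigma>. \<forall>j<Suc k. \<sigma> j \<le> (h(k := y)) j})"
    if "c < \<mu> (g ` {\<sigma>. \<forall>j<k. \<sigma> j \<le> h j})" for h k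
  proof -
    define E where "E y = g ` {\<sigma>. \<forall>j<Suc k. \<sigma> j \<le> (h(k := y)) j}" for y
    have "E y = g ` {\<sigma>. (\<forall>j<k. \<sigma> j \<le> h j) \<and> \<sigma> k \<le> y}" for y
      by (auto simp: E_def less_Suc_eq intro!: image_cong Collect_cong)
    then have "incseq E" "(\<Union>y. E y) = g ` {\<sigma>. \<forall>j<k. \<sigma> j \<le> h j}"
      by (auto simp: incseq_def intro!: image_mono)
    moreover have "E y \<subseteq> X" for y
      using g by (auto simp: E_def)
    ultimately have "(\<lambda>y. \<mu> (E y)) \<longlonglongrightarrow> \<mu> (g ` {\<sigma>. \<forall>j<k. \<sigma> j \<le> h j})"
      using incseq_tendsto by metis
    from order_tendstoD(1)[OF this that] obtain y where "c < \<mu> (E y)"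
      by (auto simp: eventually_sequentially)
    then show ?thesis
      unfolding E_def by blast
  qed
qed

lemma capacity_image_baire_box_ge:
  fixes \<mu> :: "'a::topological_space set \<Rightarrow> ennreal"
  assumes mono: "\<And>A B. A \<subseteq> B \<Longrightarrow> \<mu> A \<le> \<mu> B"
    and outer: "\<And>K c. compact K \<Longrightarrow> K \<subseteq> X \<Longrightarrow> \<mu> K < c \<Longrightarrow> \<exists>V. open V \<and> K \<subseteq> V \<and> \<mu> (X \<inter> V) < c"
    and g: "continuous_map baire_topology euclidean g" "range g \<subseteq> X"
    and n: "\<And>m. c < \<mu> (g ` {\<sigma>. \<forall>j<m. \<sigma> j \<le> n j})"
  shows "c \<le> \<mu> (g ` PiE UNIV (\<lambda>j. {..n j}))"
proof (rule ccontr)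
  assume "\<not> ?thesis"
  moreover have "compact (g ` PiE UNIV (\<lambda>j. {..n j}))" "g ` PiE UNIV (\<lambda>j. {..n j}) \<subseteq> X"
    using compact_image_baire_box[OF g(1)] g(2) by auto
  ultimately obtain V where V: "open V" "g ` PiE UNIV (\<lambda>j. {..n j}) \<subseteq> V" "\<mu> (X \<inter> V) < c"
    using outer by (meson not_le)
  have "openin baire_topology {\<sigma> \<in> topspace baire_topology. g \<sigma> \<in> V}"
    using openin_continuous_map_preimage[OF g(1)] V(1) by simp
  moreover have "PiE UNIV (\<lambda>j. {..n j}) \<subseteq> {\<sigma> \<in> topspace baire_topology. g \<sigma> \<in> V}"
    using V(2) by auto
  ultimately obtain m where "{\<sigma>. \<forall>j<m. \<sigma> j \<le> n j} \<subseteq> {\<sigma> \<in> topspace baire_topology. g \<sigma> \<in> V}"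
    using baire_box_tube by blast
  then have "g ` {\<sigma>. \<forall>j<m. \<sigma> j \<le> n j} \<subseteq> X \<inter> V"
    using g(2) by auto
  then have "\<mu> (g ` {\<sigma>. \<forall>j<m. \<sigma> j \<le> n j}) < c"
    using mono V(3) by (blast intro: le_less_trans)
  then show False
    using n[of m] by simp
qed

text \<open>Choquet's capacitability argument: bounding the coordinates of the parameter one at a time
  keeps \<open>\<mu>\<close> above \<open>c\<close>, and the limiting box has a compact image which, by outer regularity and
  the tube lemma, keeps \<open>\<mu>\<close> above \<open>c\<close> as well.\<close>
theorem analytic_set_capacity_SUP_compact:
  fixes \<mu> :: "'a::topological_space set \<Rightarrow> ennreal"
  assumes mono: "\<And>A B. A \<subseteq> B \<Longrightarrow> \<mu> A \<le> \<mu> B"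
    and incseq_tendsto: "\<And>E. (\<And>i. E i \<subseteq> X) \<Longrightarrow> incseq E \<Longrightarrow> (\<lambda>i. \<mu> (E i)) \<longlonglongrightarrow> \<mu> (\<Union>i. E i)"
    and outer: "\<And>K c. compact K \<Longrightarrow> K \<subseteq> X \<Longrightarrow> \<mu> K < c \<Longrightarrow> \<exists>V. open V \<and> K \<subseteq> V \<and> \<mu> (X \<inter> V) < c"
    and Z: "Z \<subseteq> X" "analytic_set Z"
  shows "\<mu> Z = (SUP K \<in> {K. K \<subseteq> Z \<and> compact K}. \<mu> K)"
proof (rule antisym)
  obtain g where g: "continuous_map baire_topology euclidean g" "range g = Z"
    using Z(2) unfolding analytic_set_def by blast
  show "\<mu> Z \<le> (SUP K \<in> {K. K \<subseteq> Z \<and> compact K}. \<mu> K)"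
  proof (rule dense_le)
    fix c assume "c < \<mu> Z"
    then obtain n where "\<And>k. c < \<mu> (g ` {\<sigma>. \<forall>j<k. \<sigma> j \<le> n j})"
      using capacity_choose_coordinate_bounds[OF incseq_tendsto] g(2) Z(1) by blast
    then have "c \<le> \<mu> (g ` PiE UNIV (\<lambda>j. {..n j}))"
      using capacity_image_baire_box_ge[OF mono outer g(1)] g(2) Z(1) by blast
    moreover have "compact (g ` PiE UNIV (\<lambda>j. {..n j}))" "g ` PiE UNIV (\<lambda>j. {..n j}) \<subseteq> Z"
      using compact_image_baire_box[OF g(1)] g(2) by auto
    ultimately show "c \<le> (SUP K \<in> {K. K \<subseteq> Z \<and> compact K}. \<mu> K)"
      by (blast intro: SUP_upper2)
  qed
  show "(SUP K \<in> {K. K \<subseteq> Z \<and> compact K}. \<mu> K) \<le> \<mu> Z"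
    by (rule SUP_least) (simp add: mono)
qed

theorem lemma3p4:
  fixes X :: "'a::metric_space set" and T :: "'a \<Rightarrow> 'a" and U :: "'a set set"
    and N :: nat and s :: real and f :: "'a \<Rightarrow> real"
  assumes "compact X"
    and "continuous_on X T" and "T ` X \<subseteq> X"
    and "finite U" and "\<Union>U = X" and "disjoint U"
    and "\<forall>A\<in>U. openin (top_of_set X) A \<and> closedin (top_of_set X) A"
    and "continuous_on X f"
  shows "(\<forall>E :: nat \<Rightarrow> 'a set. (\<forall>i. E i \<subseteq> X) \<longrightarrow> incseq E \<longrightarrow>
            (\<lambda>i. MNs X T N s U f (E i)) \<longlonglongrightarrow> MNs X T N s U f (\<Union>i. E i))
       \<and> (\<forall>Z. Z \<subseteq> X \<longrightarrow> analytic_set Z \<longrightarrow>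
            MNs X T N s U f Z = (SUP K \<in> {K. K \<subseteq> Z \<and> compact K}. MNs X T N s U f K))"
proof (intro conjI allI impI)
  fix E :: "nat \<Rightarrow> 'a set" assume "incseq E"
  then show "(\<lambda>i. MNs X T N s U f (E i)) \<longlonglongrightarrow> MNs X T N s U f (\<Union>i. E i)"
    by (rule MNs_incseq_tendsto[OF \<open>disjoint U\<close>])
next
  fix Z :: "'a set" assume "Z \<subseteq> X" "analytic_set Z"
  have U_open: "\<forall>A\<in>U. openin (top_of_set X) A"
    using assms(7) by blast
  show "MNs X T N s U f Z = (SUP K \<in> {K. K \<subseteq> Z \<and> compact K}. MNs X T N s U f K)"
  proof (rule analytic_set_capacity_SUP_compact)
    show "MNs X T N s U f A \<le> MNs X T N s U f B" if "A \<subseteq> B" for A B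
      using that by (rule MNs_mono)
    show "(\<lambda>i. MNs X T N s U f (E i)) \<longlonglongrightarrow> MNs X T N s U f (\<Union>i. E i)" if "incseq E" for E
      using \<open>disjoint U\<close> that by (rule MNs_incseq_tendsto)
    show "\<exists>V. open V \<and> K \<subseteq> V \<and> MNs X T N s U f (X \<inter> V) < c"
      if "MNs X T N s U f K < c" for K c
      using assms(2,3) U_open that by (rule MNs_outer_regular)
  qed fact+
qed

end
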